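(* Let $q\in(0,\tfrac12)$ and let $T\sim U(1,2)$, $S\sim U(-1,0)$ be independent. Let $p_3^{PD}$ be the probability that $$P_{T,S}(x)=(T+S-1)x^3+\big(1-T-2S+q(S-1-T)\big)x^2+\big(S+q(T-S)\big)x$$ has exactly three distinct roots in $[0,1]$. Then $$p_3^{PD}=\frac{1}{1-2q}\,\mathrm{Area}(D\cap D_2),$$ where $D=\{(x,y)\in\mathbb{R}^2:\ -1<x<0,\ -\frac{x^2}{4q}-q<y<-q\}$ and $D_2$ is the open triangle with vertices $M=(-q,-(1-q))$, $N=\big(0,-\frac{1-2q}{1-q}\big)$, $O=(0,0)$, i.e. $D_2=\{(x,y):\ -q<x<0,\ \frac{qx-(1-2q)}{1-q}<y<\frac{(1-q)x}{q}\}$.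
   Context: "Area" denotes two-dimensional Lebesgue measure. *)

theory Defs
  imports "HOL-Analysis.Analysis"
begin

definition PD_poly :: "real \<Rightarrow> real \<Rightarrow> real \<Rightarrow> real \<Rightarrow> real" where
  "PD_poly q t s x = (t + s - 1) * x ^ 3 + (1 - t - 2 * s + q * (s - 1 - t)) * x ^ 2
     + (s + q * (t - s)) * x"

text \<open>Event: P_{T,S} has exactly three distinct roots in [0,1]
  (card of an infinite set is 0, so the identically-zero case is excluded).\<close>
definition three_roots :: "real \<Rightarrow> real \<Rightarrow> real \<Rightarrow> bool" where
  "three_roots q t s \<longleftrightarrow> card {x \<in> {0..1}. PD_poly q t s x = 0} = 3"

text \<open>Joint law of independent T ~ U(1,2), S ~ U(-1,0): uniform on the rectangle.\<close>
definition TS_law :: "(real \<times> real) measure" where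
  "TS_law = uniform_measure lborel ({1<..<2} \<times> {-1<..<0})"

definition p3PD :: "real \<Rightarrow> real" where
  "p3PD q = measure TS_law {(t, s). three_roots q t s}"

definition regD :: "real \<Rightarrow> (real \<times> real) set" where
  "regD q = {(x, y). -1 < x \<and> x < 0 \<and> - (x^2 / (4 * q)) - q < y \<and> y < - q}"

definition regD2 :: "real \<Rightarrow> (real \<times> real) set" where
  "regD2 q = {(x, y). -q < x \<and> x < 0 \<and> (q * x - (1 - 2 * q)) / (1 - q) < y
                        \<and> y < (1 - q) * x / q}"

end

theory Submission
  imports Defs "HOL-Library.Quadratic_Discriminant"
begin

text \<open>
  Since \<open>P\<^sub>T\<^sub>,\<^sub>S(x) = x Q(x)\<close> with \<open>Q(1) = -q < 0\<close>, the polynomial has three roots in \<open>[0,1]\<close>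
  exactly when the quadratic \<open>Q\<close> has two distinct roots in \<open>(0,1)\<close>, a condition given by
  strict inequalities on the coefficients. In the affine coordinates
  \<open>x = (1-q)(T-1) + qS\<close>, \<open>y = q(T-1) + (1-q)S\<close> (of determinant \<open>1-2q\<close>) these inequalities
  become \<open>x < 0\<close>, \<open>y < -q\<close>, \<open>x\<^sup>2 + 4q(y+q) > 0\<close>, while the rectangle of \<open>(T,S)\<close> becomes a
  parallelogram whose part in the half plane \<open>x < 0\<close> is the triangle \<open>D\<^sub>2\<close>.
\<close>

subsection \<open>Lebesgue measure under affine maps of the plane\<close>

lemma emeasure_lborel_real_affine_vimage:
  fixes B :: "real set" and c t :: real
  assumes "c \<noteq> 0" "B \<in> sets borel"
  shows "emeasure lborel B = ennreal \<bar>c\<bar> * emeasure lborel ((\<lambda>x. t + c * x) -` B)"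
proof -
  have "emeasure lborel B =
      emeasure (density (distr lborel borel (\<lambda>x. t + c * x)) (\<lambda>_. ennreal \<bar>c\<bar>)) B"
    using lborel_real_affine[OF assms(1), of t] by simp
  also have "\<dots> = ennreal \<bar>c\<bar> * emeasure (distr lborel borel (\<lambda>x. t + c * x)) B"
    using assms by (simp add: emeasure_density nn_integral_cmult_indicator)
  also have "\<dots> = ennreal \<bar>c\<bar> * emeasure lborel ((\<lambda>x. t + c * x) -` B)"
    using assms by (simp add: emeasure_distr)
  finally show ?thesis .
qed

lemma emeasure_lborel_pair_scaled_slices_snd:
  fixes A B :: "(real \<times> real) set" and k :: ennreal
  assumes "A \<in> sets borel" "B \<in> sets borel"
    and "\<And>x. emeasure lborel (Pair x -` A) = k * emeasure lborel (Pair x -` B)"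
  shows "emeasure lborel A = k * emeasure lborel B"
proof -
  have P: "pair_sigma_finite lborel (lborel :: real measure)" ..
  have P1: "sigma_finite_measure (lborel :: real measure)" ..
  have "sets (lborel \<Otimes>\<^sub>M lborel) = sets (borel :: (real \<times> real) measure)"
    by (metis lborel_prod sets_lborel)
  then have sets: "A \<in> sets (lborel \<Otimes>\<^sub>M lborel)" "B \<in> sets (lborel \<Otimes>\<^sub>M lborel)"
    using assms by simp_all
  have "emeasure lborel A = (\<integral>\<^sup>+x. emeasure lborel (Pair x -` A) \<partial>lborel)"
    using sigma_finite_measure.emeasure_pair_measure_alt[OF P1 sets(1)] by (simp add: lborel_prod)
  also have "\<dots> = (\<integral>\<^sup>+x. k * emeasure lborel (Pair x -` B) \<partial>lborel)"
    using assms(3) by simp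
  also have "\<dots> = k * (\<integral>\<^sup>+x. emeasure lborel (Pair x -` B) \<partial>lborel)"
    by (rule nn_integral_cmult) (rule pair_sigma_finite.measurable_emeasure_Pair1[OF P sets(2)])
  also have "\<dots> = k * emeasure lborel B"
    using sigma_finite_measure.emeasure_pair_measure_alt[OF P1 sets(2)] by (simp add: lborel_prod)
  finally show ?thesis .
qed

lemma emeasure_lborel_pair_scaled_slices_fst:
  fixes A B :: "(real \<times> real) set" and k :: ennreal
  assumes "A \<in> sets borel" "B \<in> sets borel"
    and "\<And>y. emeasure lborel ((\<lambda>x. (x, y)) -` A) = k * emeasure lborel ((\<lambda>x. (x, y)) -` B)"
  shows "emeasure lborel A = k * emeasure lborel B"
proof -
  have P: "pair_sigma_finite lborel (lborel :: real measure)" ..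
  have "sets (lborel \<Otimes>\<^sub>M lborel) = sets (borel :: (real \<times> real) measure)"
    by (metis lborel_prod sets_lborel)
  then have sets: "A \<in> sets (lborel \<Otimes>\<^sub>M lborel)" "B \<in> sets (lborel \<Otimes>\<^sub>M lborel)"
    using assms by simp_all
  have "emeasure lborel A = (\<integral>\<^sup>+y. emeasure lborel ((\<lambda>x. (x, y)) -` A) \<partial>lborel)"
    using pair_sigma_finite.emeasure_pair_measure_alt2[OF P sets(1)] by (simp add: lborel_prod)
  also have "\<dots> = (\<integral>\<^sup>+y. k * emeasure lborel ((\<lambda>x. (x, y)) -` B) \<partial>lborel)"
    using assms(3) by simp
  also have "\<dots> = k * (\<integral>\<^sup>+y. emeasure lborel ((\<lambda>x. (x, y)) -` B) \<partial>lborel)"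
    by (rule nn_integral_cmult) (rule pair_sigma_finite.measurable_emeasure_Pair2[OF P sets(2)])
  also have "\<dots> = k * emeasure lborel B"
    using pair_sigma_finite.emeasure_pair_measure_alt2[OF P sets(2)] by (simp add: lborel_prod)
  finally show ?thesis .
qed

lemma emeasure_lborel_shear_fst:
  fixes A :: "(real \<times> real) set" and a k e :: real
  assumes "a \<noteq> 0" "A \<in> sets borel"
  shows "emeasure lborel A =
    ennreal \<bar>a\<bar> * emeasure lborel ((\<lambda>p. (a * fst p + k * snd p + e, snd p)) -` A)"
proof (rule emeasure_lborel_pair_scaled_slices_fst)
  let ?F = "\<lambda>p::real \<times> real. (a * fst p + k * snd p + e, snd p)"
  have "?F \<in> borel_measurable borel"
    by (intro borel_measurable_continuous_onI continuous_intros)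
  from measurable_sets[OF this assms(2)] show "?F -` A \<in> sets borel"
    by simp
  fix y :: real
  have "(\<lambda>x::real. (x, y)) \<in> borel_measurable borel"
    by measurable
  from measurable_sets[OF this assms(2)] have "(\<lambda>x. (x, y)) -` A \<in> sets borel"
    by simp
  from emeasure_lborel_real_affine_vimage[OF assms(1) this, of "k * y + e"]
  show "emeasure lborel ((\<lambda>x. (x, y)) -` A) = ennreal \<bar>a\<bar> * emeasure lborel ((\<lambda>x. (x, y)) -` (?F -` A))"
    by (simp add: vimage_def algebra_simps)
qed (fact assms)

lemma emeasure_lborel_shear_snd:
  fixes A :: "(real \<times> real) set" and b k f :: real
  assumes "b \<noteq> 0" "A \<in> sets borel"
  shows "emeasure lborel A =
    ennreal \<bar>b\<bar> * emeasure lborel ((\<lambda>p. (fst p, b * snd p + k * fst p + f)) -` A)"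
proof (rule emeasure_lborel_pair_scaled_slices_snd)
  let ?F = "\<lambda>p::real \<times> real. (fst p, b * snd p + k * fst p + f)"
  have "?F \<in> borel_measurable borel"
    by (intro borel_measurable_continuous_onI continuous_intros)
  from measurable_sets[OF this assms(2)] show "?F -` A \<in> sets borel"
    by simp
  fix x :: real
  have "(\<lambda>y::real. (x, y)) \<in> borel_measurable borel"
    by measurable
  from measurable_sets[OF this assms(2)] have "Pair x -` A \<in> sets borel"
    by simp
  from emeasure_lborel_real_affine_vimage[OF assms(1) this, of "k * x + f"]
  show "emeasure lborel (Pair x -` A) = ennreal \<bar>b\<bar> * emeasure lborel (Pair x -` (?F -` A))"
    by (simp add: vimage_def algebra_simps)
qed (fact assms)

lemma emeasure_lborel_affine_vimage:
  fixes A :: "(real \<times> real) set" and a b c d e f :: real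
  assumes "a \<noteq> 0" "a * d - b * c \<noteq> 0" "A \<in> sets borel"
  shows "emeasure lborel A = ennreal \<bar>a * d - b * c\<bar> *
    emeasure lborel ((\<lambda>p. (a * fst p + b * snd p + e, c * fst p + d * snd p + f)) -` A)"
proof -
  let ?G = "\<lambda>p::real \<times> real. (fst p, ((a * d - b * c) / a) * snd p + (c / a) * fst p + (f - c * e / a))"
  let ?H = "\<lambda>p::real \<times> real. (a * fst p + b * snd p + e, snd p)"
  let ?F = "\<lambda>p::real \<times> real. (a * fst p + b * snd p + e, c * fst p + d * snd p + f)"
  have "?G \<in> borel_measurable borel"
    by (intro borel_measurable_continuous_onI continuous_intros)
  from measurable_sets[OF this assms(3)] have G_sets: "?G -` A \<in> sets borel"
    by simp
  have comp: "?G \<circ> ?H = ?F"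
    using assms(1) by (intro ext) (simp add: field_simps)
  have GH: "?H -` ?G -` A = ?F -` A"
    by (simp only: vimage_comp comp)
  have "emeasure lborel A = ennreal \<bar>(a * d - b * c) / a\<bar> * emeasure lborel (?G -` A)"
    using assms by (intro emeasure_lborel_shear_snd) simp_all
  also have "emeasure lborel (?G -` A) = ennreal \<bar>a\<bar> * emeasure lborel (?F -` A)"
    unfolding GH[symmetric] using assms(1) G_sets by (rule emeasure_lborel_shear_fst)
  finally have "emeasure lborel A =
      ennreal \<bar>(a * d - b * c) / a\<bar> * (ennreal \<bar>a\<bar> * emeasure lborel (?F -` A))" .
  moreover have "\<bar>(a * d - b * c) / a\<bar> * \<bar>a\<bar> = \<bar>a * d - b * c\<bar>"
    using assms(1) by (simp add: abs_divide)
  ultimately show ?thesis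
    by (simp add: mult.assoc[symmetric] ennreal_mult'[symmetric])
qed

subsection \<open>Roots of the cubic in the unit interval\<close>

lemma quadratic_coeffs_if_two_roots_in_unit_interval:
  fixes a b c r1 r2 :: real
  assumes neg: "a + b + c < 0"
    and r: "r1 \<noteq> r2" "r1 \<in> {0<..1}" "r2 \<in> {0<..1}"
    and roots: "a * r1\<^sup>2 + b * r1 + c = 0" "a * r2\<^sup>2 + b * r2 + c = 0"
  shows "a < 0 \<and> c < 0 \<and> 0 < b \<and> 2 * a + b < 0 \<and> 0 < b\<^sup>2 - 4 * a * c"
proof -
  have "(r1 - r2) * (a * (r1 + r2) + b) = 0"
    using roots by (simp add: algebra_simps power2_eq_square)
  then have b: "b = - a * (r1 + r2)"
    using r(1) by simp
  have c: "c = a * r1 * r2"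
    using roots(1) unfolding b by (simp add: algebra_simps power2_eq_square)
  have "a * ((1 - r1) * (1 - r2)) = a + b + c"
    using b c by (simp add: algebra_simps)
  moreover have "r1 \<noteq> 1" "r2 \<noteq> 1"
    using roots neg by auto
  then have "0 < (1 - r1) * (1 - r2)"
    using r by auto
  ultimately have a: "a < 0"
    using neg by (metis mult_nonneg_nonneg not_le less_imp_le)
  have "b\<^sup>2 - 4 * a * c = a\<^sup>2 * (r1 - r2)\<^sup>2"
    unfolding b c by (simp add: algebra_simps power2_eq_square)
  moreover have "2 * a + b = a * (2 - r1 - r2)"
    using b by (simp add: algebra_simps)
  ultimately show ?thesis
    using a r \<open>r1 \<noteq> 1\<close> \<open>r2 \<noteq> 1\<close> b c by (auto simp: mult_neg_pos mult_pos_neg)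
qed

lemma quadratic_two_roots_in_unit_interval_if_coeffs:
  fixes a b c :: real
  assumes neg: "a + b + c < 0"
    and coeffs: "a < 0" "c < 0" "0 < b" "2 * a + b < 0" "0 < b\<^sup>2 - 4 * a * c"
  obtains r1 r2 where "r1 \<noteq> r2" "r1 \<in> {0<..<1}" "r2 \<in> {0<..<1}"
    "{x. a * x\<^sup>2 + b * x + c = 0} = {r1, r2}"
proof
  let ?r = "sqrt (discrim a b c)"
  have D: "0 < discrim a b c"
    using coeffs by (simp add: discrim_def)
  then have "0 < ?r"
    by simp
  have "discrim a b c < b\<^sup>2"
    using coeffs by (simp add: discrim_def mult_neg_neg)
  then have "?r < sqrt (b\<^sup>2)"
    by (rule real_sqrt_less_mono)
  then have "?r < b"
    using coeffs by simp
  have "(-2 * a - b)\<^sup>2 - discrim a b c = 4 * a * (a + b + c)"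
    by (simp add: discrim_def algebra_simps power2_eq_square)
  moreover have "0 < 4 * a * (a + b + c)"
    using coeffs neg by (simp add: mult_neg_neg)
  ultimately have "discrim a b c < (-2 * a - b)\<^sup>2"
    by linarith
  then have "?r < sqrt ((-2 * a - b)\<^sup>2)"
    by (rule real_sqrt_less_mono)
  then have "?r < -2 * a - b"
    using coeffs by simp
  have "2 * a < 0"
    using coeffs by simp
  have "0 < (-b + ?r) / (2 * a)" "0 < (-b - ?r) / (2 * a)"
    using \<open>2 * a < 0\<close> \<open>?r < b\<close> \<open>0 < ?r\<close> coeffs by (intro divide_neg_neg; linarith)+
  moreover have "(-b + ?r) / (2 * a) < 1" "(-b - ?r) / (2 * a) < 1"
    using \<open>2 * a < 0\<close> \<open>?r < -2 * a - b\<close> \<open>0 < ?r\<close> coeffs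
    by (subst neg_divide_less_eq; linarith)+
  ultimately show "(-b + ?r) / (2 * a) \<in> {0<..<1}" "(-b - ?r) / (2 * a) \<in> {0<..<1}"
    by simp_all
  show "(-b + ?r) / (2 * a) \<noteq> (-b - ?r) / (2 * a)"
    using coeffs \<open>0 < ?r\<close> by (simp add: divide_cancel_right)
  show "{x. a * x\<^sup>2 + b * x + c = 0} = {(-b + ?r) / (2 * a), (-b - ?r) / (2 * a)}"
    using discriminant_pos_ex[of a b c] discriminant_iff[of a _ b c] D coeffs by auto
qed

lemma card_roots_cubic_in_unit_interval_eq_3_iff:
  fixes a b c :: real
  assumes neg: "a + b + c < 0"
  shows "card {x \<in> {0..1}. x * (a * x\<^sup>2 + b * x + c) = 0} = 3 \<longleftrightarrow>
    a < 0 \<and> c < 0 \<and> 0 < b \<and> 2 * a + b < 0 \<and> 0 < b\<^sup>2 - 4 * a * c"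
  (is "card ?S = 3 \<longleftrightarrow> ?coeffs")
proof
  assume "card ?S = 3"
  then obtain r1 r2 where "r1 \<noteq> r2" "r1 \<in> ?S - {0}" "r2 \<in> ?S - {0}"
    unfolding card_3_iff by blast
  then show ?coeffs
    using quadratic_coeffs_if_two_roots_in_unit_interval[OF neg, of r1 r2] by auto
next
  assume ?coeffs
  then obtain r1 r2 where r: "r1 \<noteq> r2" "r1 \<in> {0<..<1}" "r2 \<in> {0<..<1}"
    and roots: "{x. a * x\<^sup>2 + b * x + c = 0} = {r1, r2}"
    using quadratic_two_roots_in_unit_interval_if_coeffs[OF neg] by blast
  have "?S = {0, r1, r2}"
    using r roots by auto
  then show "card ?S = 3"
    using r by simp
qed

subsection \<open>The event in affine coordinates\<close>

definition PD_coords :: "real \<Rightarrow> real \<times> real \<Rightarrow> real \<times> real" where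
  "PD_coords q p = ((1 - q) * fst p + q * snd p - (1 - q), q * fst p + (1 - q) * snd p - q)"

lemma PD_coords_eq_iff:
  "PD_coords q (t, s) = (x, y) \<longleftrightarrow> x = (1 - q) * t + q * s - (1 - q) \<and> y = q * t + (1 - q) * s - q"
  by (auto simp: PD_coords_def)

lemma PD_poly_PD_coords:
  assumes "PD_coords q (t, s) = (x, y)"
  shows "PD_poly q t s z = z * ((x + y) * z\<^sup>2 + (- x - 2 * y - 2 * q) * z + (y + q))"
proof -
  have x: "x = (1 - q) * t + q * s - (1 - q)" and y: "y = q * t + (1 - q) * s - q"
    using assms by (simp_all add: PD_coords_eq_iff)
  show ?thesis
    unfolding PD_poly_def x y by (simp add: algebra_simps power2_eq_square power3_eq_cube)
qed

lemma three_roots_iff_PD_coords: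
  assumes q: "0 < q" and xy: "PD_coords q (t, s) = (x, y)"
  shows "three_roots q t s \<longleftrightarrow> x < 0 \<and> y < -q \<and> 0 < x\<^sup>2 + 4 * q * (y + q)"
proof -
  have disc: "(- x - 2 * y - 2 * q)\<^sup>2 - 4 * (x + y) * (y + q) = x\<^sup>2 + 4 * q * (y + q)"
    by (simp add: algebra_simps power2_eq_square)
  have "three_roots q t s \<longleftrightarrow> x + y < 0 \<and> y + q < 0 \<and> 0 < - x - 2 * y - 2 * q \<and> x - 2 * q < 0
      \<and> 0 < x\<^sup>2 + 4 * q * (y + q)"
    unfolding three_roots_def PD_poly_PD_coords[OF xy] disc[symmetric]
    using card_roots_cubic_in_unit_interval_eq_3_iff[of "x + y" "- x - 2 * y - 2 * q" "y + q"] q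
    by simp
  also have "\<dots> \<longleftrightarrow> x < 0 \<and> y < -q \<and> 0 < x\<^sup>2 + 4 * q * (y + q)"
  proof (intro iffI conjI)
    assume H: "x + y < 0 \<and> y + q < 0 \<and> 0 < - x - 2 * y - 2 * q \<and> x - 2 * q < 0
      \<and> 0 < x\<^sup>2 + 4 * q * (y + q)"
    show "x < 0"
    proof (rule ccontr)
      assume "\<not> x < 0"
      \<comment> \<open>then \<open>x\<^sup>2 \<le> 2qx < -4q(y+q) < x\<^sup>2\<close>\<close>
      then have "x * (x - 2 * q) \<le> 0"
        using H by (simp add: mult_nonneg_nonpos)
      moreover have "0 < 2 * q * (- x - 2 * y - 2 * q)"
        using H q by simp
      ultimately show False
        using H by (simp add: algebra_simps power2_eq_square)
    qed
  qed (use q in auto)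
  finally show ?thesis .
qed

lemma mem_rectangle_iff_PD_coords:
  assumes q: "0 < q" "q < 1/2" and xy: "PD_coords q (t, s) = (x, y)"
  shows "(t, s) \<in> {1<..<2} \<times> {-1<..<0} \<longleftrightarrow>
    0 < (1 - q) * x - q * y \<and> (1 - q) * x - q * y < 1 - 2 * q \<and>
    - (1 - 2 * q) < (1 - q) * y - q * x \<and> (1 - q) * y - q * x < 0"
proof -
  have x: "x = (1 - q) * t + q * s - (1 - q)" and y: "y = q * t + (1 - q) * s - q"
    using xy by (simp_all add: PD_coords_eq_iff)
  have "(1 - q) * x - q * y = (1 - 2 * q) * (t - 1)" "(1 - q) * y - q * x = (1 - 2 * q) * s"
    unfolding x y by (simp_all add: algebra_simps power2_eq_square)
  moreover have "0 < 1 - 2 * q"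
    using q by simp
  moreover from this have "- (1 - 2 * q) < (1 - 2 * q) * s \<longleftrightarrow> -1 < s"
    using mult_less_cancel_left_pos[of "1 - 2 * q" "-1" s] by simp
  ultimately show ?thesis
    by (simp add: zero_less_mult_iff mult_less_0_iff)
qed

lemma regD_inter_regD2_iff:
  assumes q: "0 < q" "q < 1/2"
  shows "(x, y) \<in> regD q \<inter> regD2 q \<longleftrightarrow>
    (x < 0 \<and> y < -q \<and> 0 < x\<^sup>2 + 4 * q * (y + q)) \<and>
    (0 < (1 - q) * x - q * y \<and> (1 - q) * x - q * y < 1 - 2 * q \<and>
     - (1 - 2 * q) < (1 - q) * y - q * x \<and> (1 - q) * y - q * x < 0)"
proof -
  define u where "u = (1 - q) * x - q * y"
  define v where "v = (1 - q) * y - q * x"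
  have q1: "0 < 1 - q" and q2: "0 < 1 - 2 * q"
    using q by simp_all
  have key: "(1 - 2 * q) * x = (1 - q) * u + q * v"
    unfolding u_def v_def by (simp add: algebra_simps power2_eq_square)
  have parabola: "- (x\<^sup>2 / (4 * q)) - q < y \<longleftrightarrow> 0 < x\<^sup>2 + 4 * q * (y + q)"
    using q by (auto simp: field_simps)
  have lower: "(q * x - (1 - 2 * q)) / (1 - q) < y \<longleftrightarrow> - (1 - 2 * q) < v"
    using q1 unfolding v_def by (simp add: pos_divide_less_eq algebra_simps)
  have upper: "y < (1 - q) * x / q \<longleftrightarrow> 0 < u"
    using q unfolding u_def by (simp add: pos_less_divide_eq algebra_simps)
  have "-q < x" if "0 < u" "- (1 - 2 * q) < v"
  proof -
    have "q * (- (1 - 2 * q)) < q * v"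
      using that q by (intro mult_strict_left_mono) auto
    moreover have "0 < (1 - q) * u"
      using that q1 by simp
    ultimately have "(1 - 2 * q) * (-q) < (1 - 2 * q) * x"
      using key by (simp add: algebra_simps)
    then show ?thesis
      using q2 mult_less_cancel_left_pos by blast
  qed
  moreover have "v < 0" if "-q < x" "y < -q"
  proof -
    have "(1 - q) * y < (1 - q) * (-q)" "q * (-q) < q * x"
      using that q q1 by (intro mult_strict_left_mono; simp)+
    moreover have "0 < q * (1 - 2 * q)"
      using q q2 by simp
    ultimately show ?thesis
      unfolding v_def by (simp add: algebra_simps)
  qed
  moreover have "u < 1 - 2 * q" if "x < 0" "- (1 - 2 * q) < v"
  proof -
    have "(1 - 2 * q) * x < 0" "q * (- (1 - 2 * q)) < q * v"
      using that q q2 by (auto intro: mult_strict_left_mono simp: mult_pos_neg)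
    moreover have "q * (1 - 2 * q) < (1 - q) * (1 - 2 * q)"
      using q q2 by (intro mult_strict_right_mono) auto
    ultimately have "(1 - q) * u < (1 - q) * (1 - 2 * q)"
      using key by (simp add: algebra_simps)
    then show ?thesis
      using q1 by simp
  qed
  moreover have "(x, y) \<in> regD q \<inter> regD2 q \<longleftrightarrow> -1 < x \<and> -q < x \<and> x < 0 \<and> y < -q \<and>
      - (x\<^sup>2 / (4 * q)) - q < y \<and> (q * x - (1 - 2 * q)) / (1 - q) < y \<and> y < (1 - q) * x / q"
    unfolding regD_def regD2_def by auto
  ultimately show ?thesis
    unfolding parabola lower upper u_def[symmetric] v_def[symmetric] using q by auto
qed

lemma rectangle_inter_three_roots_eq_vimage:
  assumes "0 < q" "q < 1/2"
  shows "({1<..<2} \<times> {-1<..<0}) \<inter> {(t, s). three_roots q t s} = PD_coords q -` (regD q \<inter> regD2 q)"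
proof (rule set_eqI)
  fix p :: "real \<times> real"
  obtain t s where p: "p = (t, s)"
    by fastforce
  obtain x y where xy: "PD_coords q (t, s) = (x, y)"
    by fastforce
  show "p \<in> ({1<..<2} \<times> {-1<..<0}) \<inter> {(t, s). three_roots q t s} \<longleftrightarrow> p \<in> PD_coords q -` (regD q \<inter> regD2 q)"
    using mem_rectangle_iff_PD_coords[OF assms xy] three_roots_iff_PD_coords[OF assms(1) xy]
      regD_inter_regD2_iff[OF assms, of x y]
    by (auto simp: p xy)
qed

lemma emeasure_lborel_vimage_PD_coords:
  assumes "0 < q" "q < 1/2" "A \<in> sets borel"
  shows "emeasure lborel A = ennreal (1 - 2 * q) * emeasure lborel (PD_coords q -` A)"
proof -
  have "PD_coords q = (\<lambda>p. ((1 - q) * fst p + q * snd p + - (1 - q), q * fst p + (1 - q) * snd p + - q))"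
    by (simp add: fun_eq_iff PD_coords_def)
  moreover have "(1 - q) * (1 - q) - q * q = 1 - 2 * q"
    by (simp add: algebra_simps)
  ultimately show ?thesis
    using emeasure_lborel_affine_vimage[of "1 - q" "1 - q" q q A "- (1 - q)" "- q"] assms by simp
qed

lemma sets_three_roots_event:
  assumes "0 < q"
  shows "{(t, s). three_roots q t s} \<in> sets borel"
proof -
  have "{(t, s). three_roots q t s} = {p. fst (PD_coords q p) < 0 \<and> snd (PD_coords q p) < -q \<and>
      0 < (fst (PD_coords q p))\<^sup>2 + 4 * q * (snd (PD_coords q p) + q)}"
    using three_roots_iff_PD_coords[OF assms] by (auto simp: prod_eq_iff)
  also have "\<dots> \<in> sets borel"
    unfolding PD_coords_def
    by (intro borel_open open_Collect_conj open_Collect_less continuous_intros)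
  finally show ?thesis .
qed

lemma sets_regD_inter_regD2:
  assumes "0 < q" "q < 1/2"
  shows "regD q \<inter> regD2 q \<in> sets borel"
proof -
  have "regD q \<inter> regD2 q = {p. -1 < fst p \<and> fst p < 0 \<and> - ((fst p)\<^sup>2 / (4 * q)) - q < snd p \<and>
      snd p < - q \<and> -q < fst p \<and> (q * fst p - (1 - 2 * q)) / (1 - q) < snd p \<and>
      snd p < (1 - q) * fst p / q}"
    unfolding regD_def regD2_def by auto
  also have "\<dots> \<in> sets borel"
    using assms by (intro borel_open open_Collect_conj open_Collect_less continuous_intros) auto
  finally show ?thesis .
qed

lemma emeasure_lborel_rectangle: "emeasure lborel ({1<..<2::real} \<times> {-1<..<0::real}) = 1"
proof -
  have "emeasure lborel ({1<..<2::real} \<times> {-1<..<0::real}) =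
      emeasure (lborel \<Otimes>\<^sub>M lborel) ({1<..<2::real} \<times> {-1<..<0::real})"
    by (simp add: lborel_prod)
  also have "\<dots> = emeasure lborel {1<..<2::real} * emeasure lborel {-1<..<0::real}"
    by (rule sigma_finite_measure.emeasure_pair_measure_Times) (unfold_locales, auto)
  finally show ?thesis
    by simp
qed

lemma p3PD_eq_measure_lborel:
  assumes "0 < q"
  shows "p3PD q = measure lborel (({1<..<2} \<times> {-1<..<0}) \<inter> {(t, s). three_roots q t s})"
proof -
  have "{1<..<2::real} \<times> {-1<..<0::real} \<in> sets borel"
    by (intro borel_open open_Times) auto
  then show ?thesis
    using sets_three_roots_event[OF assms] emeasure_lborel_rectangle
    by (simp add: p3PD_def TS_law_def measure_def divide_ennreal_def)
qed

theorem proposition2p4: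
  fixes q :: real
  assumes "0 < q" and "q < 1/2"
  shows "p3PD q = (1 / (1 - 2 * q)) * measure lborel (regD q \<inter> regD2 q)"
proof -
  have "p3PD q = measure lborel (PD_coords q -` (regD q \<inter> regD2 q))"
    using p3PD_eq_measure_lborel rectangle_inter_three_roots_eq_vimage assms by simp
  also have "\<dots> = measure lborel (regD q \<inter> regD2 q) / (1 - 2 * q)"
    using emeasure_lborel_vimage_PD_coords[OF assms sets_regD_inter_regD2[OF assms]] assms
    by (simp add: measure_def enn2real_mult)
  finally show ?thesis
    by simp
qed

end
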